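(* Let $G=(V,E)$ be a finite, simple, undirected, connected graph, let $S\subseteq V$ be nonempty and let $\ell\geq 2$ be an integer. If $S$ is an $\{\ell\}$-resolving set of $G$, then for every vertex $x\in V$ and every nonempty set $Y\subseteq V$ with $x\notin Y$ and $|Y|\leq \ell-1$ there exists $s\in S$ such that $d(s,x)<d(s,Y)$.
   Context: $d(u,v)$ denotes the shortest-path distance in $G$, and for a nonempty $X\subseteq V$, $d(s,X)=\min_{x\in X} d(s,x)$. For $S=\{s_1,\dots,s_k\}\subseteq V$ and nonempty $X\subseteq V$, $\mathcal{D}_S(X)=(d(s_1,X),\dots,d(s_k,X))$. A set $S\subseteq V$ is an $\{\ell\}$-resolving set of $G$ if for all distinct nonempty sets $X,Y\subseteq V$ with $|X|\leq\ell$ and $|Y|\leq \ell$ we have $\mathcal{D}_S(X)\neq\mathcal{D}_S(Y)$. *)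

theory Defs
  imports Main
begin

definition simple_graph :: "'a set \<Rightarrow> ('a \<Rightarrow> 'a \<Rightarrow> bool) \<Rightarrow> bool" where
  "simple_graph V E \<longleftrightarrow> finite V \<and> V \<noteq> {} \<and>
     (\<forall>x y. E x y \<longrightarrow> x \<in> V \<and> y \<in> V) \<and>
     (\<forall>x y. E x y \<longrightarrow> E y x) \<and> (\<forall>x. \<not> E x x)"

definition walk_len :: "('a \<Rightarrow> 'a \<Rightarrow> bool) \<Rightarrow> 'a \<Rightarrow> 'a \<Rightarrow> nat \<Rightarrow> bool" where
  "walk_len E u v n \<longleftrightarrow>
     (\<exists>f :: nat \<Rightarrow> 'a. f 0 = u \<and> f n = v \<and> (\<forall>i<n. E (f i) (f (Suc i))))"

definition connected_graph :: "'a set \<Rightarrow> ('a \<Rightarrow> 'a \<Rightarrow> bool) \<Rightarrow> bool" where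
  "connected_graph V E \<longleftrightarrow> (\<forall>u\<in>V. \<forall>v\<in>V. \<exists>n. walk_len E u v n)"

definition dist :: "('a \<Rightarrow> 'a \<Rightarrow> bool) \<Rightarrow> 'a \<Rightarrow> 'a \<Rightarrow> nat" where
  "dist E u v = (LEAST n. walk_len E u v n)"

definition setdist :: "('a \<Rightarrow> 'a \<Rightarrow> bool) \<Rightarrow> 'a \<Rightarrow> 'a set \<Rightarrow> nat" where
  "setdist E s X = Min ((\<lambda>x. dist E s x) ` X)"

definition l_resolving :: "'a set \<Rightarrow> ('a \<Rightarrow> 'a \<Rightarrow> bool) \<Rightarrow> nat \<Rightarrow> 'a set \<Rightarrow> bool" where
  "l_resolving V E l S \<longleftrightarrow> S \<subseteq> V \<and>
     (\<forall>X Y. X \<subseteq> V \<longrightarrow> Y \<subseteq> V \<longrightarrow> X \<noteq> {} \<longrightarrow> Y \<noteq> {} \<longrightarrow>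
        card X \<le> l \<longrightarrow> card Y \<le> l \<longrightarrow> X \<noteq> Y \<longrightarrow>
        (\<exists>s\<in>S. setdist E s X \<noteq> setdist E s Y))"

end

theory Submission
  imports Defs
begin

(* Adding x to Y changes the distance vector, since Y \<union> {x} and Y are distinct sets
   of size at most l. As d(s, Y \<union> {x}) = min (d(s,x)) (d(s,Y)), the coordinate s
   where the vectors differ must satisfy d(s,x) < d(s,Y). *)

lemma setdist_insert:
  assumes "finite Y" and "Y \<noteq> {}"
  shows "setdist E s (insert x Y) = min (dist E s x) (setdist E s Y)"
  unfolding setdist_def using assms by (simp add: Min_insert)

lemma l_resolving_separates_insert:
  assumes "l_resolving V E l S"
    and "x \<in> V" and "Y \<subseteq> V" and "Y \<noteq> {}" and "x \<notin> Y"
    and "finite Y" and "card Y < l"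
  shows "\<exists>s\<in>S. setdist E s (insert x Y) \<noteq> setdist E s Y"
proof -
  have separates: "\<And>X Y. X \<subseteq> V \<Longrightarrow> Y \<subseteq> V \<Longrightarrow> X \<noteq> {} \<Longrightarrow> Y \<noteq> {} \<Longrightarrow>
      card X \<le> l \<Longrightarrow> card Y \<le> l \<Longrightarrow> X \<noteq> Y \<Longrightarrow> \<exists>s\<in>S. setdist E s X \<noteq> setdist E s Y"
    using assms(1) unfolding l_resolving_def by blast
  show ?thesis
  proof (rule separates)
    show "card (insert x Y) \<le> l"
      using assms(5-7) by simp
    show "insert x Y \<noteq> Y"
      using assms(5) by blast
  qed (use assms(2-4,7) in auto)
qed

lemma l_resolving_dist_less_setdist:
  assumes "l_resolving V E l S"
    and "x \<in> V" and "Y \<subseteq> V" and "Y \<noteq> {}" and "x \<notin> Y"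
    and "finite Y" and "card Y < l"
  shows "\<exists>s\<in>S. dist E s x < setdist E s Y"
proof -
  obtain s where "s \<in> S" "setdist E s (insert x Y) \<noteq> setdist E s Y"
    using l_resolving_separates_insert[OF assms] by blast
  then have "min (dist E s x) (setdist E s Y) \<noteq> setdist E s Y"
    using setdist_insert[OF assms(6,4)] by simp
  with \<open>s \<in> S\<close> show ?thesis
    by (metis min.absorb2 not_le)
qed

theorem mainTheorem2:
  fixes V :: "'a set" and E :: "'a \<Rightarrow> 'a \<Rightarrow> bool" and S :: "'a set" and l :: nat
  assumes "simple_graph V E" and "connected_graph V E"
    and "S \<subseteq> V" and "S \<noteq> {}" and "l \<ge> 2"
    and "l_resolving V E l S"
  shows "\<forall>x\<in>V. \<forall>Y. Y \<subseteq> V \<longrightarrow> Y \<noteq> {} \<longrightarrow> x \<notin> Y \<longrightarrow> card Y \<le> l - 1 \<longrightarrow>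
           (\<exists>s\<in>S. dist E s x < setdist E s Y)"
proof (intro ballI allI impI)
  fix x Y
  assume "x \<in> V" "Y \<subseteq> V" "Y \<noteq> {}" "x \<notin> Y" "card Y \<le> l - 1"
  moreover have "finite Y"
    using assms(1) \<open>Y \<subseteq> V\<close> finite_subset by (auto simp: simple_graph_def)
  moreover have "card Y < l"
    using \<open>card Y \<le> l - 1\<close> assms(5) by linarith
  ultimately show "\<exists>s\<in>S. dist E s x < setdist E s Y"
    by (intro l_resolving_dist_less_setdist[OF assms(6)])
qed

end
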